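(* Let $L$ be a finite simplicial complex and $H\subseteq L$ a hypergraph, with $\mathrm{Ext}=\Delta\gamma\delta\gamma$ and $\mathrm{Int}=\delta\gamma\Delta\gamma$. Let $r$ be the smallest non-negative integer with $\mathrm{Ext}^r(\gamma H)=L$ and $t$ the smallest non-negative integer with $\mathrm{Int}^t(H)=\emptyset$ (assuming both exist). Then $t\in\{r-1,r,r+1\}$.
   Context: $L$ is a finite collection of nonempty sets closed under nonempty subsets; hypergraphs in $L$ are subsets of $L$. $\Delta H=\{\sigma\in L:\exists\tau\in H,\sigma\subseteq\tau\}$, $\delta H=\{\sigma\in L:\text{every nonempty }\tau\subseteq\sigma\text{ lies in }H\}$, $\gamma H=L\setminus H$; $T^0$ is the identity. *)

theory Defs
  imports Main
begin

definition simplicial_complex :: "'a set set \<Rightarrow> bool" where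
  "simplicial_complex L \<longleftrightarrow> finite L \<and> {} \<notin> L \<and>
     (\<forall>\<sigma>\<in>L. \<forall>\<tau>. \<tau> \<noteq> {} \<and> \<tau> \<subseteq> \<sigma> \<longrightarrow> \<tau> \<in> L)"

definition Delta_op :: "'a set set \<Rightarrow> 'a set set \<Rightarrow> 'a set set" where
  "Delta_op L H = {\<sigma> \<in> L. \<exists>\<tau>\<in>H. \<sigma> \<subseteq> \<tau>}"

definition delta_op :: "'a set set \<Rightarrow> 'a set set \<Rightarrow> 'a set set" where
  "delta_op L H = {\<sigma> \<in> L. \<forall>\<tau>. \<tau> \<noteq> {} \<and> \<tau> \<subseteq> \<sigma> \<longrightarrow> \<tau> \<in> H}"

definition gamma_op :: "'a set set \<Rightarrow> 'a set set \<Rightarrow> 'a set set" where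
  "gamma_op L H = L - H"

definition Ext_op :: "'a set set \<Rightarrow> 'a set set \<Rightarrow> 'a set set" where
  "Ext_op L = Delta_op L \<circ> gamma_op L \<circ> delta_op L \<circ> gamma_op L"

definition Int_op :: "'a set set \<Rightarrow> 'a set set \<Rightarrow> 'a set set" where
  "Int_op L = delta_op L \<circ> gamma_op L \<circ> Delta_op L \<circ> gamma_op L"

end

theory Submission
  imports Defs
begin

text \<open>Write \<open>Up = \<gamma>\<delta>\<gamma>\<close>, the upward closure within \<open>L\<close>. Then \<open>Ext = \<Delta> \<circ> Up\<close>, while
  complementation in \<open>L\<close> turns \<open>Int\<close> into \<open>Up \<circ> \<Delta>\<close>. Both \<open>\<Delta>\<close> and \<open>Up\<close> are monotone and
  extensive on hypergraphs in \<open>L\<close>, so the iterates of \<open>\<Delta> \<circ> Up\<close> and \<open>Up \<circ> \<Delta>\<close> starting from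
  \<open>\<gamma>H\<close> interleave: each is dominated by the other one step later. Hence whichever
  reaches \<open>L\<close> first is followed by the other at most one step later.\<close>

lemma funpow_comp_Suc: "((f \<circ> g) ^^ Suc k) x = f (((g \<circ> f) ^^ k) (g x))"
  by (induction k arbitrary: x) auto

lemma funpow_comp_le_funpow_comp_Suc:
  fixes f g :: "'a::order \<Rightarrow> 'a"
  assumes "mono f" and "mono g"
    and "x \<le> a" and "x \<le> f x"
    and g_extensive: "\<And>y. y \<le> a \<Longrightarrow> y \<le> g y"
    and f_bounded: "\<And>y. f y \<le> a"
  shows "((f \<circ> g) ^^ k) x \<le> ((g \<circ> f) ^^ Suc k) x"
proof -
  have bounded: "((f \<circ> g) ^^ k) x \<le> a"
    using \<open>x \<le> a\<close> f_bounded by (cases k) auto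
  have "((f \<circ> g) ^^ k) x \<le> g (((f \<circ> g) ^^ k) x)"
    using g_extensive[OF bounded] .
  also have "\<dots> \<le> g (((f \<circ> g) ^^ k) (f x))"
    using assms(1,2,4) by (intro monoD[OF \<open>mono g\<close>] funpow_mono) (simp add: mono_def)
  also have "\<dots> = ((g \<circ> f) ^^ Suc k) x"
    by (rule funpow_comp_Suc[symmetric])
  finally show ?thesis .
qed

definition Up_op :: "'a set set \<Rightarrow> 'a set set \<Rightarrow> 'a set set" where
  "Up_op L X = gamma_op L (delta_op L (gamma_op L X))"

lemma Ext_op_eq: "Ext_op L = Delta_op L \<circ> Up_op L"
  by (rule ext) (simp add: Ext_op_def Up_op_def)

lemma mono_Delta_op: "mono (Delta_op L)"
  by (auto simp: mono_def Delta_op_def)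

lemma mono_Up_op: "mono (Up_op L)"
  by (auto simp: mono_def Up_op_def gamma_op_def delta_op_def)

lemma Delta_op_subset: "Delta_op L X \<subseteq> L"
  by (auto simp: Delta_op_def)

lemma Up_op_subset: "Up_op L X \<subseteq> L"
  by (auto simp: Up_op_def gamma_op_def)

lemma subset_Delta_op: "X \<subseteq> L \<Longrightarrow> X \<subseteq> Delta_op L X"
  by (auto simp: Delta_op_def)

lemma subset_Up_op:
  assumes "simplicial_complex L" and "X \<subseteq> L"
  shows "X \<subseteq> Up_op L X"
  using assms unfolding Up_op_def gamma_op_def delta_op_def simplicial_complex_def
  by (auto, metis subset_refl)

lemma gamma_Int_op_funpow:
  "L - (Int_op L ^^ k) H = ((Up_op L \<circ> Delta_op L) ^^ k) (L - H)"
proof (induction k)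
  case (Suc k)
  have "L - Int_op L Y = (Up_op L \<circ> Delta_op L) (L - Y)" for Y
    by (auto simp: Int_op_def Up_op_def gamma_op_def delta_op_def)
  then show ?case
    using Suc by simp
qed simp

lemma Int_op_funpow_empty_iff:
  assumes "H \<subseteq> L"
  shows "(Int_op L ^^ k) H = {} \<longleftrightarrow> ((Up_op L \<circ> Delta_op L) ^^ k) (L - H) = L"
proof -
  have "(Int_op L ^^ k) H \<subseteq> L"
    using assms by (cases k) (auto simp: Int_op_def delta_op_def)
  then show ?thesis
    using gamma_Int_op_funpow[of L k H] by auto
qed

lemma funpow_Up_Delta_reaches_after_Delta_Up:
  assumes "simplicial_complex L" and "X \<subseteq> L"
    and "((Delta_op L \<circ> Up_op L) ^^ k) X = L"
  shows "((Up_op L \<circ> Delta_op L) ^^ Suc k) X = L"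
proof -
  have "((Delta_op L \<circ> Up_op L) ^^ k) X \<subseteq> ((Up_op L \<circ> Delta_op L) ^^ Suc k) X"
    by (rule funpow_comp_le_funpow_comp_Suc[where a = L])
      (use assms(1,2) in \<open>auto simp: mono_Delta_op mono_Up_op subset_Delta_op subset_Up_op Delta_op_subset\<close>)
  moreover have "((Up_op L \<circ> Delta_op L) ^^ Suc k) X \<subseteq> L"
    by (simp add: Up_op_subset)
  ultimately show ?thesis
    using assms(3) by blast
qed

lemma funpow_Delta_Up_reaches_after_Up_Delta:
  assumes "simplicial_complex L" and "X \<subseteq> L"
    and "((Up_op L \<circ> Delta_op L) ^^ k) X = L"
  shows "((Delta_op L \<circ> Up_op L) ^^ Suc k) X = L"
proof -
  have "((Up_op L \<circ> Delta_op L) ^^ k) X \<subseteq> ((Delta_op L \<circ> Up_op L) ^^ Suc k) X"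
    by (rule funpow_comp_le_funpow_comp_Suc[where a = L])
      (use assms(1,2) in \<open>auto simp: mono_Delta_op mono_Up_op subset_Delta_op subset_Up_op Up_op_subset\<close>)
  moreover have "((Delta_op L \<circ> Up_op L) ^^ Suc k) X \<subseteq> L"
    by (simp add: Delta_op_subset)
  ultimately show ?thesis
    using assms(3) by blast
qed

theorem corollary3p5:
  fixes L H :: "'a set set" and r t :: nat
  assumes "simplicial_complex L" and "H \<subseteq> L"
    and "(Ext_op L ^^ r) (gamma_op L H) = L"
    and "\<forall>k<r. (Ext_op L ^^ k) (gamma_op L H) \<noteq> L"
    and "(Int_op L ^^ t) H = {}"
    and "\<forall>k<t. (Int_op L ^^ k) H \<noteq> {}"
  shows "int t \<in> {int r - 1, int r, int r + 1}"
proof -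
  have X: "L - H \<subseteq> L" by blast
  have Ext_iterate: "(Ext_op L ^^ k) (gamma_op L H) = ((Delta_op L \<circ> Up_op L) ^^ k) (L - H)"
    for k by (simp add: Ext_op_eq gamma_op_def)
  have "((Delta_op L \<circ> Up_op L) ^^ r) (L - H) = L"
    using assms(3) by (simp add: Ext_iterate)
  then have "(Int_op L ^^ Suc r) H = {}"
    using funpow_Up_Delta_reaches_after_Delta_Up[OF assms(1) X]
      Int_op_funpow_empty_iff[OF assms(2)] by blast
  then have "t \<le> Suc r"
    using assms(6) not_le by blast
  have "((Up_op L \<circ> Delta_op L) ^^ t) (L - H) = L"
    using assms(5) Int_op_funpow_empty_iff[OF assms(2)] by blast
  then have "(Ext_op L ^^ Suc t) (gamma_op L H) = L"
    using funpow_Delta_Up_reaches_after_Up_Delta[OF assms(1) X] Ext_iterate by presburger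
  then have "r \<le> Suc t"
    using assms(4) not_le by blast
  show ?thesis
    using \<open>t \<le> Suc r\<close> \<open>r \<le> Suc t\<close> by auto
qed

end
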